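(* Let $k\ge 0$, $d\ge1$. A vector $\mathfrak{c}=(c_1,\ldots,c_d)\in\mathbb{N}^d$ is the clique vector of a $k$-connected threshold graph if and only if the vector $\mathfrak{b}=(b_1,\ldots,b_d)$ defined by \[ \sum_{i=1}^d b_i x^{i-1}=\sum_{i=1}^d c_i (x-1)^{i-1} \] has positive components, $d\ge k$, and $b_1=b_2=\cdots=b_k=1$.
   Context: For a graph $G$, $S(G)$ is obtained by adding a new vertex adjacent to all vertices of $G$, and $D(G)$ by adding a new isolated vertex. A threshold graph is a graph obtainable from the graph with no vertices by a finite sequence of $S$- and $D$-operations (with the first operation applied to the empty graph being $S$). The clique vector $(c_1,\ldots,c_d)$ of a graph records the number $c_i$ of cliques with exactly $i$ vertices, $d$ being the largest size of a clique. A graph is $k$-connected if it has at least $k$ vertices and removing any set of fewer than $k$ vertices leaves a connected graph; every graph is $0$-connected. *)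

theory Defs
  imports "HOL-Computational_Algebra.Polynomial"
begin

text \<open>Finite simple graphs with vertices in nat: a vertex set V and a symmetric,
irreflexive adjacency relation E that only relates vertices of V.\<close>

definition S_op :: "nat \<Rightarrow> nat set \<Rightarrow> (nat \<Rightarrow> nat \<Rightarrow> bool) \<Rightarrow> (nat \<Rightarrow> nat \<Rightarrow> bool)" where
  "S_op v V E = (\<lambda>x y. E x y \<or> (x = v \<and> y \<in> V) \<or> (y = v \<and> x \<in> V))"

text \<open>Threshold graphs (up to relabelling of vertices): built from the empty graph by
adding a dominating vertex (S) or an isolated vertex (D).\<close>
inductive threshold_graph :: "nat set \<Rightarrow> (nat \<Rightarrow> nat \<Rightarrow> bool) \<Rightarrow> bool" where
  empty: "threshold_graph {} (\<lambda>_ _. False)"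
| S: "threshold_graph V E \<Longrightarrow> v \<notin> V \<Longrightarrow> threshold_graph (insert v V) (S_op v V E)"
| D: "threshold_graph V E \<Longrightarrow> v \<notin> V \<Longrightarrow> threshold_graph (insert v V) E"

definition is_clique :: "nat set \<Rightarrow> (nat \<Rightarrow> nat \<Rightarrow> bool) \<Rightarrow> nat set \<Rightarrow> bool" where
  "is_clique V E C \<longleftrightarrow> C \<subseteq> V \<and> (\<forall>x\<in>C. \<forall>y\<in>C. x \<noteq> y \<longrightarrow> E x y)"

definition clique_number :: "nat set \<Rightarrow> (nat \<Rightarrow> nat \<Rightarrow> bool) \<Rightarrow> nat" where
  "clique_number V E = Max (card ` {C. is_clique V E C})"

text \<open>Clique vector (c_1,...,c_d): entry i-1 of the list is the number of cliques with exactly i vertices,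
d being the largest clique size.\<close>
definition clique_vector :: "nat set \<Rightarrow> (nat \<Rightarrow> nat \<Rightarrow> bool) \<Rightarrow> nat list" where
  "clique_vector V E = map (\<lambda>i. card {C. is_clique V E C \<and> card C = i}) [1..<clique_number V E + 1]"

definition connected_on :: "nat set \<Rightarrow> (nat \<Rightarrow> nat \<Rightarrow> bool) \<Rightarrow> bool" where
  "connected_on W E \<longleftrightarrow> (\<forall>x\<in>W. \<forall>y\<in>W. (\<lambda>a b. a \<in> W \<and> b \<in> W \<and> E a b)\<^sup>*\<^sup>* x y)"

definition k_connected :: "nat \<Rightarrow> nat set \<Rightarrow> (nat \<Rightarrow> nat \<Rightarrow> bool) \<Rightarrow> bool" where
  "k_connected k V E \<longleftrightarrow> k \<le> card V \<and>
     (\<forall>X\<subseteq>V. card X < k \<longrightarrow> connected_on (V - X) E)"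

text \<open>The polynomial sum_{i=1}^d c_i (x-1)^{i-1}; its coefficients are b_1,...,b_d.\<close>
definition b_poly :: "nat list \<Rightarrow> int poly" where
  "b_poly c = (\<Sum>i<length c. smult (int (c ! i)) ([:-1, 1:] ^ i))"

end

theory Submission
  imports Defs
begin

text \<open>
  For a graph G with clique vector (c_1, ..., c_d) let b_G(x) = sum_i c_i (x - 1)^(i-1).
  A dominating vertex v turns every clique C into the two cliques C and C + v, so
  c_i' = c_i + c_(i-1) and b_S(G) = 1 + x b_G; an isolated vertex only adds a 1-clique, so
  b_D(G) = b_G + 1. Hence the polynomials b_G of threshold graphs are exactly the polynomials
  with positive coefficients b_1, ..., b_d, d the clique number: reading the coefficients from
  the top, each b_j is produced by one S-step followed by b_j - 1 D-steps. An S-step raises the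
  connectivity by one, while a D-step applied to a nonempty graph disconnects it; so a threshold
  graph is k-connected iff its construction ends with k consecutive S-steps, i.e. iff
  b_1 = ... = b_k = 1.
\<close>

lemma pcompose_power: "pcompose (p ^ n) q = pcompose p q ^ n"
  by (induct n) (simp_all add: pcompose_1 pcompose_mult)

lemma b_poly_pcompose_shift: "pcompose (b_poly c) [:1, 1:] = (\<Sum>i<length c. monom (int (c ! i)) i)"
proof -
  have "pcompose [:-1, 1:] [:1, 1:] = ([:0, 1:] :: int poly)"
    by (simp add: pcompose_pCons)
  then show ?thesis
    unfolding b_poly_def pcompose_sum pcompose_smult pcompose_power
    by (simp add: monom_altdef)
qed

lemma b_poly_inject: "length c = length c' \<Longrightarrow> b_poly c = b_poly c' \<Longrightarrow> c = c'"
proof (rule nth_equalityI)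
  fix i assume "length c = length c'" "b_poly c = b_poly c'" "i < length c"
  then have "coeff (pcompose (b_poly c) [:1, 1:]) i = coeff (pcompose (b_poly c') [:1, 1:]) i"
    by simp
  with \<open>i < length c\<close> \<open>length c = length c'\<close> show "c ! i = c' ! i"
    unfolding b_poly_pcompose_shift coeff_sum by (simp add: sum.delta)
qed

lemma coeff_b_poly_eq_0: "length c \<le> j \<Longrightarrow> coeff (b_poly c) j = 0"
  unfolding b_poly_def coeff_sum
  by (intro sum.neutral) (auto intro!: coeff_eq_0 simp: degree_linear_power)


definition clique_count :: "nat set \<Rightarrow> (nat \<Rightarrow> nat \<Rightarrow> bool) \<Rightarrow> nat \<Rightarrow> nat" where
  "clique_count V E i = card {C. is_clique V E C \<and> card C = i}"

definition clique_poly :: "nat set \<Rightarrow> (nat \<Rightarrow> nat \<Rightarrow> bool) \<Rightarrow> int poly" where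
  "clique_poly V E =
     (\<Sum>i<clique_number V E. smult (int (clique_count V E (Suc i))) ([:-1, 1:] ^ i))"

lemma length_clique_vector: "length (clique_vector V E) = clique_number V E"
  by (simp add: clique_vector_def)

lemma b_poly_clique_vector: "b_poly (clique_vector V E) = clique_poly V E"
  unfolding b_poly_def clique_poly_def length_clique_vector
  by (intro sum.cong) (auto simp: clique_vector_def clique_count_def simp del: upt_Suc)

lemma coeff_clique_poly_eq_0: "clique_number V E \<le> j \<Longrightarrow> coeff (clique_poly V E) j = 0"
  using coeff_b_poly_eq_0[of "clique_vector V E" j] by (simp add: b_poly_clique_vector length_clique_vector)

lemma threshold_graph_finite: "threshold_graph V E \<Longrightarrow> finite V"
  by (induct rule: threshold_graph.induct) auto

lemma threshold_graph_edge_vertices: "threshold_graph V E \<Longrightarrow> E x y \<Longrightarrow> x \<in> V \<and> y \<in> V"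
  by (induct rule: threshold_graph.induct) (auto simp: S_op_def)

lemma is_clique_empty: "is_clique V E {}"
  by (simp add: is_clique_def)

lemma finite_cliques: "finite V \<Longrightarrow> finite {C. is_clique V E C}"
  by (rule finite_subset[of _ "Pow V"]) (auto simp: is_clique_def)

lemma finite_clique: "finite V \<Longrightarrow> is_clique V E C \<Longrightarrow> finite C"
  by (auto simp: is_clique_def intro: finite_subset)

lemma card_clique_le_clique_number: "finite V \<Longrightarrow> is_clique V E C \<Longrightarrow> card C \<le> clique_number V E"
  unfolding clique_number_def using finite_cliques[of V E] by (intro Max_ge) auto

lemma clique_number_attained: "finite V \<Longrightarrow> \<exists>C. is_clique V E C \<and> card C = clique_number V E"
proof -
  assume "finite V"
  then have "clique_number V E \<in> card ` {C. is_clique V E C}"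
    unfolding clique_number_def using finite_cliques is_clique_empty[of V E] by (intro Max_in) auto
  then show ?thesis by auto
qed

lemma clique_number_eqI:
  assumes "finite V" "\<And>C. is_clique V E C \<Longrightarrow> card C \<le> n" "is_clique V E C\<^sub>0" "card C\<^sub>0 = n"
  shows "clique_number V E = n"
  using assms by (metis le_antisym card_clique_le_clique_number clique_number_attained)

lemma clique_number_empty: "clique_number {} E = 0"
  using clique_number_attained[of "{}" E] by (auto simp: is_clique_def)

lemma clique_number_pos: "finite V \<Longrightarrow> V \<noteq> {} \<Longrightarrow> 0 < clique_number V E"
  using card_clique_le_clique_number[of V E "{u}" for u] by (force simp: is_clique_def)

lemma clique_count_0: "finite V \<Longrightarrow> clique_count V E 0 = 1"
proof -
  assume "finite V"
  then have "{C. is_clique V E C \<and> card C = 0} = {{}}"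
    using finite_clique is_clique_empty by auto
  then show ?thesis by (simp add: clique_count_def)
qed

lemma clique_count_eq_0: "finite V \<Longrightarrow> clique_number V E < i \<Longrightarrow> clique_count V E i = 0"
  unfolding clique_count_def using card_clique_le_clique_number[of V E]
  by (metis (mono_tags, lifting) card_eq_0_iff empty_Collect_eq leD)

lemma clique_poly_eq_sum:
  assumes "finite V" "clique_number V E \<le> N"
  shows "clique_poly V E = (\<Sum>i<N. smult (int (clique_count V E (Suc i))) ([:-1, 1:] ^ i))"
  using assms(2)
proof (induct N rule: dec_induct)
  case base then show ?case by (simp add: clique_poly_def)
next
  case (step n) then show ?case by (simp add: clique_count_eq_0[OF assms(1)])
qed

lemma k_connected_0: "k_connected 0 V E"
  by (simp add: k_connected_def)

lemma k_connected_empty_iff: "k_connected k {} E \<longleftrightarrow> k = 0"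
  by (auto simp: k_connected_def connected_on_def)

lemma connected_on_cong:
  "(\<And>a b. a \<in> W \<Longrightarrow> b \<in> W \<Longrightarrow> E a b = E' a b) \<Longrightarrow> connected_on W E = connected_on W E'"
proof -
  assume "\<And>a b. a \<in> W \<Longrightarrow> b \<in> W \<Longrightarrow> E a b = E' a b"
  then have "(\<lambda>a b. a \<in> W \<and> b \<in> W \<and> E a b) = (\<lambda>a b. a \<in> W \<and> b \<in> W \<and> E' a b)"
    by (intro ext) auto
  then show ?thesis by (simp add: connected_on_def)
qed


locale fresh_vertex =
  fixes V :: "nat set" and E :: "nat \<Rightarrow> nat \<Rightarrow> bool" and v :: nat
  assumes finite: "finite V" and fresh: "v \<notin> V" and edge_vertices: "\<And>x y. E x y \<Longrightarrow> x \<in> V \<and> y \<in> V"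
begin

lemma is_clique_S_op:
  "is_clique (insert v V) (S_op v V E) C \<longleftrightarrow> is_clique V E C \<or> (v \<in> C \<and> is_clique V E (C - {v}))"
  using fresh edge_vertices unfolding is_clique_def S_op_def by blast

lemma clique_count_S_op:
  "clique_count (insert v V) (S_op v V E) (Suc i) = clique_count V E (Suc i) + clique_count V E i"
proof -
  let ?A = "{C. is_clique V E C \<and> card C = Suc i}"
  let ?B = "{C. is_clique V E C \<and> card C = i}"
  have avoid: "v \<notin> C" if "is_clique V E C" for C
    using that fresh by (auto simp: is_clique_def)
  have "{C. is_clique (insert v V) (S_op v V E) C \<and> card C = Suc i} = ?A \<union> insert v ` ?B"
  proof (intro set_eqI iffI)
    fix C assume "C \<in> {C. is_clique (insert v V) (S_op v V E) C \<and> card C = Suc i}"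
    moreover have "finite C" if "is_clique V E (C - {v})"
      using finite_clique[OF finite that] by simp
    ultimately show "C \<in> ?A \<union> insert v ` ?B"
      unfolding is_clique_S_op by (auto intro!: image_eqI[of C _ "C - {v}"])
  next
    fix C assume "C \<in> ?A \<union> insert v ` ?B"
    then show "C \<in> {C. is_clique (insert v V) (S_op v V E) C \<and> card C = Suc i}"
      using avoid finite_clique[OF finite] by (auto simp: is_clique_S_op)
  qed
  moreover have "?A \<inter> insert v ` ?B = {}"
    using avoid by blast
  moreover have "inj_on (insert v) ?B"
  proof (rule inj_onI)
    fix X Y assume "X \<in> ?B" "Y \<in> ?B" "insert v X = insert v Y"
    moreover from this have "v \<notin> X" "v \<notin> Y" using avoid by auto
    ultimately show "X = Y" by (metis insert_ident)
  qed
  moreover have "finite ?A" "finite ?B"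
    using finite_cliques[OF finite, of E] by (auto intro: finite_subset)
  ultimately show ?thesis
    unfolding clique_count_def by (simp add: card_Un_disjoint card_image)
qed

lemma clique_number_S_op: "clique_number (insert v V) (S_op v V E) = Suc (clique_number V E)"
proof -
  obtain C\<^sub>0 where C\<^sub>0: "is_clique V E C\<^sub>0" "card C\<^sub>0 = clique_number V E"
    using clique_number_attained[OF finite] by blast
  moreover have "v \<notin> C\<^sub>0" "finite C\<^sub>0"
    using C\<^sub>0 fresh finite_clique[OF finite] by (auto simp: is_clique_def)
  ultimately have C\<^sub>1: "is_clique (insert v V) (S_op v V E) (insert v C\<^sub>0)"
      "card (insert v C\<^sub>0) = Suc (clique_number V E)"
    by (auto simp: is_clique_S_op)
  show ?thesis
  proof (rule clique_number_eqI[OF _ _ C\<^sub>1])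
    fix C assume C: "is_clique (insert v V) (S_op v V E) C"
    show "card C \<le> Suc (clique_number V E)"
    proof (cases "is_clique V E C")
      case True then show ?thesis using card_clique_le_clique_number[OF finite] by force
    next
      case False
      with C have "v \<in> C" "is_clique V E (C - {v})" by (auto simp: is_clique_S_op)
      moreover from this have "finite C" using finite_clique[OF finite, of E "C - {v}"] by simp
      ultimately have "card C = Suc (card (C - {v}))" by (metis card_Suc_Diff1)
      with \<open>is_clique V E (C - {v})\<close> show ?thesis
        using card_clique_le_clique_number[OF finite] by simp
    qed
  qed (use finite in simp)
qed

lemma clique_poly_S_op: "clique_poly (insert v V) (S_op v V E) = pCons 1 (clique_poly V E)"
proof -
  let ?P = "[:-1, 1:] :: int poly" and ?\<omega> = "clique_number V E"
  have "clique_poly (insert v V) (S_op v V E)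
      = (\<Sum>i<Suc ?\<omega>. smult (int (clique_count V E (Suc i))) (?P ^ i))
        + (\<Sum>i<Suc ?\<omega>. smult (int (clique_count V E i)) (?P ^ i))"
    unfolding clique_poly_def clique_number_S_op clique_count_S_op
    by (simp add: smult_add_left sum.distrib)
  also have "(\<Sum>i<Suc ?\<omega>. smult (int (clique_count V E (Suc i))) (?P ^ i)) = clique_poly V E"
    using clique_poly_eq_sum[OF finite, of E "Suc ?\<omega>"] by simp
  also have "(\<Sum>i<Suc ?\<omega>. smult (int (clique_count V E i)) (?P ^ i)) = 1 + ?P * clique_poly V E"
    unfolding sum.lessThan_Suc_shift clique_poly_def sum_distrib_left
    by (simp add: clique_count_0[OF finite] mult_smult_right)
  finally show ?thesis
    by (simp add: algebra_simps one_pCons)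
qed

lemma is_clique_add_isolated: "is_clique (insert v V) E C \<longleftrightarrow> is_clique V E C \<or> C = {v}"
  using fresh edge_vertices unfolding is_clique_def by blast

lemma clique_count_add_isolated:
  "clique_count (insert v V) E i = clique_count V E i + (if i = 1 then 1 else 0)"
proof -
  let ?A = "{C. is_clique V E C \<and> card C = i}"
  have "{C. is_clique (insert v V) E C \<and> card C = i} = ?A \<union> (if i = 1 then {{v}} else {})"
    using is_clique_add_isolated by auto
  moreover have "finite ?A"
    using finite_cliques[OF finite, of E] by (auto intro: finite_subset)
  moreover have "{v} \<notin> ?A"
    using fresh by (auto simp: is_clique_def)
  ultimately show ?thesis
    unfolding clique_count_def by auto
qed

lemma clique_number_add_isolated: "clique_number (insert v V) E = max (clique_number V E) 1"
proof -
  obtain C\<^sub>0 where C\<^sub>0: "is_clique V E C\<^sub>0" "card C\<^sub>0 = clique_number V E"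
    using clique_number_attained[OF finite] by blast
  have "\<exists>C. is_clique (insert v V) E C \<and> card C = max (clique_number V E) 1"
  proof (cases "clique_number V E = 0")
    case True then show ?thesis by (intro exI[of _ "{v}"]) (simp add: is_clique_add_isolated)
  next
    case False then show ?thesis using C\<^sub>0 by (intro exI[of _ C\<^sub>0]) (simp add: is_clique_add_isolated)
  qed
  then obtain C\<^sub>1 where C\<^sub>1: "is_clique (insert v V) E C\<^sub>1" "card C\<^sub>1 = max (clique_number V E) 1"
    by blast
  show ?thesis
  proof (rule clique_number_eqI[OF _ _ C\<^sub>1])
    fix C assume "is_clique (insert v V) E C"
    then show "card C \<le> max (clique_number V E) 1"
      using is_clique_add_isolated card_clique_le_clique_number[OF finite] by fastforce
  qed (use finite in simp)
qed

lemma clique_poly_add_isolated: "clique_poly (insert v V) E = clique_poly V E + 1"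
proof -
  let ?P = "[:-1, 1:] :: int poly" and ?N = "max (clique_number V E) 1"
  have "clique_poly (insert v V) E
      = (\<Sum>i<?N. smult (int (clique_count V E (Suc i))) (?P ^ i))
        + (\<Sum>i<?N. smult (if i = 0 then 1 else 0) (?P ^ i))"
    unfolding clique_poly_def clique_number_add_isolated clique_count_add_isolated
    by (simp add: smult_add_left sum.distrib if_distrib[of int] cong: if_cong)
  also have "(\<Sum>i<?N. smult (if i = 0 then 1 else 0) (?P ^ i)) = 1"
    by (simp add: if_distrib[of "\<lambda>a. smult a _"] sum.delta cong: if_cong)
  finally show ?thesis
    using clique_poly_eq_sum[OF finite, of E ?N] by simp
qed

lemma connected_on_S_op_avoiding: "v \<notin> W \<Longrightarrow> connected_on W (S_op v V E) = connected_on W E"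
  by (rule connected_on_cong) (auto simp: S_op_def)

lemma connected_on_S_op_containing:
  assumes "v \<in> W" "W \<subseteq> insert v V"
  shows "connected_on W (S_op v V E)"
  unfolding connected_on_def
proof (intro ballI)
  fix x y assume "x \<in> W" "y \<in> W"
  let ?R = "\<lambda>a b. a \<in> W \<and> b \<in> W \<and> S_op v V E a b"
  have "?R\<^sup>*\<^sup>* a v \<and> ?R\<^sup>*\<^sup>* v a" if "a \<in> W" for a
  proof (cases "a = v")
    case False
    then have "?R a v" "?R v a" using assms that by (auto simp: S_op_def)
    then show ?thesis by auto
  qed simp
  then show "?R\<^sup>*\<^sup>* x y"
    using \<open>x \<in> W\<close> \<open>y \<in> W\<close> by (meson rtranclp_trans)
qed

lemma k_connected_Suc_S_op_iff:
  "k_connected (Suc k) (insert v V) (S_op v V E) \<longleftrightarrow> k_connected k V E"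
proof
  assume conn: "k_connected (Suc k) (insert v V) (S_op v V E)"
  show "k_connected k V E"
    unfolding k_connected_def
  proof (intro conjI allI impI)
    show "k \<le> card V" using conn finite fresh by (simp add: k_connected_def)
    fix X assume X: "X \<subseteq> V" "card X < k"
    then have "card (insert v X) < Suc k" "insert v X \<subseteq> insert v V"
      using finite fresh by (auto simp: card_insert_if finite_subset)
    then have "connected_on (insert v V - insert v X) (S_op v V E)"
      using conn unfolding k_connected_def by blast
    moreover have "insert v V - insert v X = V - X" using fresh by auto
    ultimately show "connected_on (V - X) E" using connected_on_S_op_avoiding fresh by auto
  qed
next
  assume conn: "k_connected k V E"
  show "k_connected (Suc k) (insert v V) (S_op v V E)"
    unfolding k_connected_def
  proof (intro conjI allI impI)
    show "Suc k \<le> card (insert v V)" using conn finite fresh by (simp add: k_connected_def)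
    fix X assume X: "X \<subseteq> insert v V" "card X < Suc k"
    show "connected_on (insert v V - X) (S_op v V E)"
    proof (cases "v \<in> X")
      case True
      have "finite X" using X finite finite_subset by blast
      moreover from this True have "0 < card X" by (auto simp: card_gt_0_iff)
      ultimately have "card (X - {v}) < k" "X - {v} \<subseteq> V"
        using X True by (auto simp: card_Diff_singleton)
      then have "connected_on (V - (X - {v})) E" using conn by (simp add: k_connected_def)
      moreover have "insert v V - X = V - (X - {v})" using True fresh by auto
      ultimately show ?thesis using connected_on_S_op_avoiding fresh by auto
    next
      case False then show ?thesis using X by (intro connected_on_S_op_containing) auto
    qed
  qed
qed

lemma k_connected_Suc_add_isolated_iff: "k_connected (Suc k) (insert v V) E \<longleftrightarrow> V = {} \<and> k = 0"
proof
  assume conn: "k_connected (Suc k) (insert v V) E"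
  have "V = {}"
  proof (rule ccontr)
    assume "V \<noteq> {}" then obtain u where "u \<in> V" by auto
    have "connected_on (insert v V) E" using conn by (auto simp: k_connected_def)
    then have "(\<lambda>a b. a \<in> insert v V \<and> b \<in> insert v V \<and> E a b)\<^sup>*\<^sup>* v u"
      using \<open>u \<in> V\<close> by (auto simp: connected_on_def)
    then show False
    proof (cases rule: converse_rtranclpE)
      case base then show False using \<open>u \<in> V\<close> fresh by auto
    next
      case (step w) then show False using edge_vertices fresh by auto
    qed
  qed
  moreover have "Suc k \<le> card (insert v V)" using conn by (simp add: k_connected_def)
  ultimately show "V = {} \<and> k = 0" by simp
next
  assume "V = {} \<and> k = 0"
  then show "k_connected (Suc k) (insert v V) E"
    by (auto simp: k_connected_def connected_on_def)
qed

end

lemma fresh_vertex_threshold_graph: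
  "threshold_graph V E \<Longrightarrow> v \<notin> V \<Longrightarrow> fresh_vertex V E v"
  by unfold_locales (auto dest: threshold_graph_finite threshold_graph_edge_vertices)

lemma threshold_graph_obtain_fresh:
  assumes "threshold_graph V E"
  obtains v where "v \<notin> V" "fresh_vertex V E v"
  using ex_new_if_finite[OF infinite_UNIV_nat threshold_graph_finite[OF assms]]
    fresh_vertex_threshold_graph[OF assms] by blast


lemma coeff_clique_poly_pos:
  "threshold_graph V E \<Longrightarrow> j < clique_number V E \<Longrightarrow> 0 < coeff (clique_poly V E) j"
proof (induct arbitrary: j rule: threshold_graph.induct)
  case empty then show ?case by (simp add: clique_number_empty)
next
  case (S V E v)
  interpret fresh_vertex V E v using S by (simp add: fresh_vertex_threshold_graph)
  show ?case using S by (auto simp: clique_number_S_op clique_poly_S_op coeff_pCons split: nat.split)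
next
  case (D V E v)
  interpret fresh_vertex V E v using D by (simp add: fresh_vertex_threshold_graph)
  have "0 \<le> coeff (clique_poly V E) 0"
    using D(2)[of 0] coeff_clique_poly_eq_0[of V E 0] by fastforce
  then show ?case
    using D by (auto simp: clique_number_add_isolated clique_poly_add_isolated coeff_1)
qed

lemma all_coeff_pCons_eq_iff:
  "(\<forall>j<Suc k. coeff (pCons a p) j = b) \<longleftrightarrow> a = b \<and> (\<forall>j<k. coeff p j = b)"
  by (auto simp: less_Suc_eq_0_disj coeff_pCons)

lemma k_connected_threshold_graph_iff:
  "threshold_graph V E \<Longrightarrow>
   k_connected k V E \<longleftrightarrow> k \<le> clique_number V E \<and> (\<forall>j<k. coeff (clique_poly V E) j = 1)"
proof (induct arbitrary: k rule: threshold_graph.induct)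
  case empty then show ?case by (auto simp: k_connected_empty_iff clique_number_empty)
next
  case (S V E v)
  interpret fresh_vertex V E v using S by (simp add: fresh_vertex_threshold_graph)
  show ?case
  proof (cases k)
    case 0 then show ?thesis by (simp add: k_connected_0)
  next
    case (Suc k') then show ?thesis
      using S(2)[of k']
      by (simp add: k_connected_Suc_S_op_iff clique_number_S_op clique_poly_S_op all_coeff_pCons_eq_iff)
  qed
next
  case (D V E v)
  interpret fresh_vertex V E v using D by (simp add: fresh_vertex_threshold_graph)
  show ?case
  proof (cases k)
    case 0 then show ?thesis by (simp add: k_connected_0)
  next
    case (Suc k')
    show ?thesis
    proof (cases "V = {}")
      case True then show ?thesis
        unfolding Suc k_connected_Suc_add_isolated_iff clique_number_add_isolated clique_poly_add_isolated
        by (auto simp: clique_number_empty clique_poly_def)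
    next
      case False
      then have "0 < coeff (clique_poly V E) 0"
        using coeff_clique_poly_pos[OF D(1)] clique_number_pos[OF finite] by blast
      then have "coeff (clique_poly V E + 1) 0 \<noteq> 1" by simp
      then show ?thesis
        unfolding Suc k_connected_Suc_add_isolated_iff clique_poly_add_isolated using False by auto
    qed
  qed
qed

lemma threshold_graph_add_isolated_vertices:
  assumes "threshold_graph V E" "0 < clique_number V E"
  shows "\<exists>V' E'. threshold_graph V' E' \<and> clique_number V' E' = clique_number V E
                 \<and> clique_poly V' E' = clique_poly V E + of_nat m"
proof (induct m)
  case 0 then show ?case using assms(1) by auto
next
  case (Suc m)
  then obtain V' E' where G: "threshold_graph V' E'" "clique_number V' E' = clique_number V E"
      "clique_poly V' E' = clique_poly V E + of_nat m"
    by blast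
  obtain v where "v \<notin> V'" "fresh_vertex V' E' v"
    using threshold_graph_obtain_fresh[OF G(1)] by blast
  then interpret fresh_vertex V' E' v by simp
  show ?case
    using G assms(2) threshold_graph.D[OF G(1) \<open>v \<notin> V'\<close>]
    by (intro exI[of _ "insert v V'"] exI[of _ E'])
       (auto simp: clique_number_add_isolated clique_poly_add_isolated)
qed

lemma threshold_graph_realizes_clique_poly:
  assumes "\<forall>j<n. 0 < coeff p j" "\<forall>j\<ge>n. coeff p j = 0"
  shows "\<exists>V E. threshold_graph V E \<and> clique_number V E = n \<and> clique_poly V E = p"
  using assms
proof (induct n arbitrary: p)
  case 0
  then have "p = 0" by (intro poly_eqI) auto
  then show ?case
    using threshold_graph.empty by (force simp: clique_poly_def clique_number_empty)
next
  case (Suc n)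
  obtain a q where p: "p = pCons a q" by (cases p)
  with Suc.prems have "0 < a" "\<forall>j<n. 0 < coeff q j" "\<forall>j\<ge>n. coeff q j = 0"
    by (auto simp: coeff_pCons split: nat.split)
  then obtain V E where G: "threshold_graph V E" "clique_number V E = n" "clique_poly V E = q"
    using Suc.hyps by blast
  obtain v where "v \<notin> V" "fresh_vertex V E v"
    using threshold_graph_obtain_fresh[OF G(1)] by blast
  then interpret fresh_vertex V E v by simp
  obtain V' E' where G': "threshold_graph V' E'" "clique_number V' E' = Suc n"
      "clique_poly V' E' = pCons 1 q + of_nat (nat (a - 1))"
    using threshold_graph_add_isolated_vertices[OF threshold_graph.S[OF G(1) \<open>v \<notin> V\<close>], of "nat (a - 1)"]
    by (auto simp: G clique_number_S_op clique_poly_S_op)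
  have "pCons 1 q + of_nat (nat (a - 1)) = p"
    using \<open>0 < a\<close> p by (intro poly_eqI) (auto simp: coeff_pCons of_nat_poly split: nat.split)
  then show ?case using G' by auto
qed


theorem corollary2p3:
  fixes k d :: nat and c :: "nat list"
  assumes "d \<ge> 1" and "length c = d"
  shows "(\<exists>V E. threshold_graph V E \<and> k_connected k V E \<and> clique_vector V E = c) \<longleftrightarrow>
         ((\<forall>j<d. coeff (b_poly c) j > 0) \<and> k \<le> d \<and> (\<forall>j<k. coeff (b_poly c) j = 1))"
proof
  assume "\<exists>V E. threshold_graph V E \<and> k_connected k V E \<and> clique_vector V E = c"
  then obtain V E where G: "threshold_graph V E" "k_connected k V E" "clique_vector V E = c"
    by blast
  then have "clique_number V E = d" "b_poly c = clique_poly V E"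
    using assms(2) length_clique_vector b_poly_clique_vector by metis+
  then show "(\<forall>j<d. coeff (b_poly c) j > 0) \<and> k \<le> d \<and> (\<forall>j<k. coeff (b_poly c) j = 1)"
    using G coeff_clique_poly_pos k_connected_threshold_graph_iff by auto
next
  assume b: "(\<forall>j<d. coeff (b_poly c) j > 0) \<and> k \<le> d \<and> (\<forall>j<k. coeff (b_poly c) j = 1)"
  moreover have "\<forall>j\<ge>d. coeff (b_poly c) j = 0"
    using coeff_b_poly_eq_0 assms(2) by auto
  ultimately obtain V E where G: "threshold_graph V E" "clique_number V E = d" "clique_poly V E = b_poly c"
    using threshold_graph_realizes_clique_poly by blast
  then have "clique_vector V E = c"
    using b_poly_inject assms(2) length_clique_vector b_poly_clique_vector by metis
  moreover have "k_connected k V E"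
    using k_connected_threshold_graph_iff[OF G(1)] G b by auto
  ultimately show "\<exists>V E. threshold_graph V E \<and> k_connected k V E \<and> clique_vector V E = c"
    using G(1) by blast
qed

end
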